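(* For every integer $n\ge 1$, let $M(n)$ denote the maximum modulus of an independence root over all (simple) graphs on $n$ vertices. Then $$M(n)\ge \begin{cases} 3^{\frac{n-3}{3}} & \text{if } n\equiv 0 \pmod 3,\\ 3^{\frac{n-1}{3}} & \text{if } n\equiv 1 \pmod 3,\\ 3^{\frac{n-2}{3}} & \text{if } n\equiv 2 \pmod 3.\end{cases}$$
   Context: For a finite simple graph $G$, the independence polynomial is $i(G,x)=\sum_{k=0}^{\alpha(G)} i_k x^k$, where $i_k$ is the number of independent sets of size $k$ in $G$ (with $i_0=1$) and $\alpha(G)$ is the independence number (maximum size of an independent set). Its roots in $\mathbb{C}$ are the independence roots of $G$. *)

theory Defs
  imports "HOL-Computational_Algebra.Polynomial" Complex_Main
begin

text \<open>A finite simple graph with vertex set V: a finite vertex set together with a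
  symmetric, irreflexive adjacency relation E (only its restriction to V matters).\<close>
definition simple_graph :: "'a set \<Rightarrow> ('a \<Rightarrow> 'a \<Rightarrow> bool) \<Rightarrow> bool" where
  "simple_graph V E \<longleftrightarrow> finite V \<and> (\<forall>u\<in>V. \<forall>v\<in>V. E u v \<longrightarrow> E v u) \<and> (\<forall>v\<in>V. \<not> E v v)"

definition indep_set :: "'a set \<Rightarrow> ('a \<Rightarrow> 'a \<Rightarrow> bool) \<Rightarrow> 'a set \<Rightarrow> bool" where
  "indep_set V E S \<longleftrightarrow> S \<subseteq> V \<and> (\<forall>u\<in>S. \<forall>v\<in>S. \<not> E u v)"

definition indep_number :: "'a set \<Rightarrow> ('a \<Rightarrow> 'a \<Rightarrow> bool) \<Rightarrow> nat" where
  "indep_number V E = Max (card ` {S. indep_set V E S})"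

definition indep_count :: "'a set \<Rightarrow> ('a \<Rightarrow> 'a \<Rightarrow> bool) \<Rightarrow> nat \<Rightarrow> nat" where
  "indep_count V E k = card {S. indep_set V E S \<and> card S = k}"

definition indep_poly :: "'a set \<Rightarrow> ('a \<Rightarrow> 'a \<Rightarrow> bool) \<Rightarrow> complex poly" where
  "indep_poly V E = (\<Sum>k\<le>indep_number V E. monom (of_nat (indep_count V E k)) k)"

text \<open>M(n): maximum modulus of an independence root over all simple graphs on n vertices
  (vertex set {0..<n} without loss of generality).\<close>
definition max_indep_root_modulus :: "nat \<Rightarrow> real" where
  "max_indep_root_modulus n =
     Max {norm z | z E. simple_graph {..<n} E \<and> poly (indep_poly {..<n} E) z = 0}"

end

theory Submission imports Defs begin

(* Take k = (n - 1) div 3 disjoint triangles together with a hub vertex adjacent to two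
   vertices of every triangle, and pad with isolated vertices up to n vertices. Deleting
   the hub gives the independence polynomial (1 + z)^(n - 3k - 1) ((1 + 3z)^k + z (1 + z)^k),
   and the bracket changes sign on the negative reals between -3^k and -(3^k + k), so the
   graph has a real independence root of modulus at least 3^k. *)

definition indep_sum :: "'a set \<Rightarrow> ('a \<Rightarrow> 'a \<Rightarrow> bool) \<Rightarrow> 'b::comm_ring_1 \<Rightarrow> 'b" where
  "indep_sum V E z = (\<Sum>S | indep_set V E S. z ^ card S)"

lemma finite_indep_sets: "finite V \<Longrightarrow> finite {S. indep_set V E S}"
  by (rule finite_subset[of _ "Pow V"]) (auto simp: indep_set_def)

lemma simple_graph_subset: "simple_graph V E \<Longrightarrow> W \<subseteq> V \<Longrightarrow> simple_graph W E"
  unfolding simple_graph_def by (auto intro: finite_subset)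

lemma poly_indep_poly:
  assumes "finite V"
  shows "poly (indep_poly V E) z = indep_sum V E z"
proof -
  let ?I = "{S. indep_set V E S}"
  have fin: "finite ?I" using assms by (rule finite_indep_sets)
  have "poly (indep_poly V E) z = (\<Sum>k\<le>Max (card ` ?I). of_nat (card {S\<in>?I. card S = k}) * z ^ k)"
    unfolding indep_poly_def indep_number_def indep_count_def by (simp add: poly_sum poly_monom)
  also have "\<dots> = (\<Sum>k\<le>Max (card ` ?I). \<Sum>S\<in>{S\<in>?I. card S = k}. z ^ card S)"
    by (rule sum.cong) auto
  also have "\<dots> = (\<Sum>S\<in>?I. z ^ card S)"
    by (rule sum.group[OF fin]) (use fin in auto)
  finally show ?thesis unfolding indep_sum_def .
qed

lemma indep_poly_eq_sum_monom:
  assumes "finite V"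
  shows "indep_poly V E = (\<Sum>S | indep_set V E S. monom 1 (card S))"
proof -
  have "poly (indep_poly V E) = poly (\<Sum>S | indep_set V E S. monom 1 (card S))"
    using assms by (auto simp: poly_indep_poly indep_sum_def poly_sum poly_monom)
  then show ?thesis by (simp add: poly_eq_poly_eq_iff)
qed

lemma indep_sum_at_0:
  assumes "finite V"
  shows "indep_sum V E 0 = 1"
proof -
  have "indep_sum V E 0 = (\<Sum>S | indep_set V E S. if S = {} then 1 else 0)"
    unfolding indep_sum_def
    by (rule sum.cong) (auto simp: indep_set_def power_0_left card_eq_0_iff dest: finite_subset[OF _ assms])
  also have "\<dots> = 1" using finite_indep_sets[OF assms, of E] by (simp add: sum.delta' indep_set_def)
  finally show ?thesis .
qed

lemma indep_sum_remove_vertex: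
  assumes G: "simple_graph V E" and v: "v \<in> V"
  shows "indep_sum V E z = indep_sum (V - {v}) E z + z * indep_sum {u\<in>V. u \<noteq> v \<and> \<not> E v u} E z"
proof -
  let ?W = "{u\<in>V. u \<noteq> v \<and> \<not> E v u}"
  have fin: "finite V" using G by (simp add: simple_graph_def)
  have split: "{S. indep_set V E S} = {S. indep_set (V - {v}) E S} \<union> insert v ` {S. indep_set ?W E S}"
  proof (intro set_eqI iffI)
    fix S assume S: "S \<in> {S. indep_set V E S}"
    show "S \<in> {S. indep_set (V - {v}) E S} \<union> insert v ` {S. indep_set ?W E S}"
    proof (cases "v \<in> S")
      case True
      then have "S = insert v (S - {v})" "indep_set ?W E (S - {v})"
        using S by (auto simp: indep_set_def)
      then show ?thesis by blast
    qed (use S in \<open>auto simp: indep_set_def\<close>)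
  qed (use G v in \<open>auto simp: indep_set_def simple_graph_def\<close>)
  have disjoint: "{S. indep_set (V - {v}) E S} \<inter> insert v ` {S. indep_set ?W E S} = {}"
    by (auto simp: indep_set_def)
  have inj: "inj_on (insert v) {S. indep_set ?W E S}"
    unfolding inj_on_def indep_set_def by blast
  have card_insert: "card (insert v S) = Suc (card S)" if "indep_set ?W E S" for S
  proof -
    have "finite S" "v \<notin> S" using that fin by (auto simp: indep_set_def intro: finite_subset)
    then show ?thesis by simp
  qed
  have "indep_sum V E z = indep_sum (V - {v}) E z + (\<Sum>S\<in>insert v ` {S. indep_set ?W E S}. z ^ card S)"
    unfolding indep_sum_def split
    by (rule sum.union_disjoint) (use fin disjoint in \<open>simp_all add: finite_indep_sets\<close>)
  also have "(\<Sum>S\<in>insert v ` {S. indep_set ?W E S}. z ^ card S) = z * indep_sum ?W E z"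
    unfolding indep_sum_def sum.reindex[OF inj] sum_distrib_left
    by (rule sum.cong) (simp_all add: card_insert)
  finally show ?thesis .
qed

lemma indep_sum_add_clique:
  assumes "simple_graph (V \<union> C) E" "V \<inter> C = {}"
    and "\<And>c c'. c \<in> C \<Longrightarrow> c' \<in> C \<Longrightarrow> c \<noteq> c' \<Longrightarrow> E c c'"
    and "\<And>c v. c \<in> C \<Longrightarrow> v \<in> V \<Longrightarrow> \<not> E c v"
  shows "indep_sum (V \<union> C) E z = (1 + of_nat (card C) * z) * indep_sum V E z"
proof -
  have "finite C" using assms(1) by (simp add: simple_graph_def)
  then show ?thesis using assms
  proof (induction C rule: finite_induct)
    case empty
    then show ?case by simp
  next
    case (insert c C)
    have removed: "(V \<union> insert c C) - {c} = V \<union> C"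
      using insert.hyps(2) insert.prems(2) by auto
    have non_neighbours: "{u \<in> V \<union> insert c C. u \<noteq> c \<and> \<not> E c u} = V"
      using insert.prems(2-4) by auto
    have "simple_graph (V \<union> C) E" by (rule simple_graph_subset[OF insert.prems(1)]) auto
    have "indep_sum (V \<union> insert c C) E z = indep_sum (V \<union> C) E z + z * indep_sum V E z"
      using indep_sum_remove_vertex[OF insert.prems(1), of c z]
      unfolding removed non_neighbours by simp
    also have "indep_sum (V \<union> C) E z = (1 + of_nat (card C) * z) * indep_sum V E z"
      using \<open>simple_graph (V \<union> C) E\<close> insert.prems by (intro insert.IH) auto
    finally show ?case using insert.hyps by (simp add: algebra_simps)
  qed
qed

lemma indep_sum_insert_isolated:
  assumes "simple_graph (insert v V) E" "v \<notin> V" "\<And>u. u \<in> V \<Longrightarrow> \<not> E v u"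
  shows "indep_sum (insert v V) E z = (1 + z) * indep_sum V E z"
  using indep_sum_add_clique[of V "{v}" E z] assms by simp

lemma indep_sum_edgeless:
  assumes "simple_graph V E" "\<And>u v. u \<in> V \<Longrightarrow> v \<in> V \<Longrightarrow> \<not> E u v"
  shows "indep_sum V E z = (1 + z) ^ card V"
proof -
  have "finite V" using assms(1) by (simp add: simple_graph_def)
  then show ?thesis using assms
  proof (induction V rule: finite_induct)
    case empty
    have "{S. indep_set {} E S} = {{}}" by (auto simp: indep_set_def)
    then show ?case by (simp add: indep_sum_def)
  next
    case (insert v V)
    then have "indep_sum (insert v V) E z = (1 + z) * indep_sum V E z"
      by (intro indep_sum_insert_isolated) auto
    also have "indep_sum V E z = (1 + z) ^ card V"
      using insert simple_graph_subset[OF insert.prems(1)] by blast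
    finally show ?case using insert.hyps by simp
  qed
qed

(* Vertices 3i, 3i+1, 3i+2 (i < k) form the i-th triangle, vertex 3k is the hub, adjacent
   to 3i+1 and 3i+2, and all vertices beyond 3k are isolated. *)
definition hub_triangles :: "nat \<Rightarrow> nat \<Rightarrow> nat \<Rightarrow> bool" where
  "hub_triangles k u v \<longleftrightarrow> u \<noteq> v \<and>
     ((u < 3*k \<and> v < 3*k \<and> u div 3 = v div 3)
      \<or> (u = 3*k \<and> v < 3*k \<and> v mod 3 \<noteq> 0) \<or> (v = 3*k \<and> u < 3*k \<and> u mod 3 \<noteq> 0))"

lemma simple_graph_hub_triangles: "finite V \<Longrightarrow> simple_graph V (hub_triangles k)"
  unfolding simple_graph_def hub_triangles_def by auto

lemma indep_sum_hub_triangles_first_triangles: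
  "j \<le> k \<Longrightarrow> indep_sum {..<3*j} (hub_triangles k) z = (1 + 3*z) ^ j"
proof (induction j)
  case 0
  show ?case using indep_sum_edgeless[of "{}" "hub_triangles k" z] by (simp add: simple_graph_def)
next
  case (Suc j)
  let ?C = "{3*j, 3*j+1, 3*j+2}"
  have new_triangle: "c div 3 = j" "c < 3*k" if "c \<in> ?C" for c
    using that Suc.prems by auto
  have earlier: "v div 3 < j" if "v < 3*j" for v
    using that by auto
  have clique: "hub_triangles k c c'" if "c \<in> ?C" "c' \<in> ?C" "c \<noteq> c'" for c c'
    using new_triangle[OF that(1)] new_triangle[OF that(2)] that(3) by (simp add: hub_triangles_def)
  have separated: "\<not> hub_triangles k c v" if "c \<in> ?C" "v < 3*j" for c v
    using new_triangle[OF that(1)] earlier[OF that(2)] that(2) Suc.prems by (auto simp: hub_triangles_def)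
  have "indep_sum {..<3 * Suc j} (hub_triangles k) z = indep_sum ({..<3*j} \<union> ?C) (hub_triangles k) z"
    by (rule arg_cong[where f = "\<lambda>V. indep_sum V _ z"]) auto
  also have "\<dots> = (1 + of_nat (card ?C) * z) * indep_sum {..<3*j} (hub_triangles k) z"
    by (rule indep_sum_add_clique)
      (use clique separated in \<open>auto simp: simple_graph_hub_triangles\<close>)
  finally show ?case using Suc by simp
qed

lemma indep_sum_hub_triangles_core:
  "indep_sum {..<3*k+1} (hub_triangles k) z = (1 + 3*z) ^ k + z * (1 + z) ^ k"
proof -
  let ?W = "{u\<in>{..<3*k+1}. u \<noteq> 3*k \<and> \<not> hub_triangles k (3*k) u}"
  have W: "?W = (\<lambda>i. 3*i) ` {..<k}"
  proof (intro set_eqI iffI)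
    fix u assume "u \<in> ?W"
    then have "u = 3 * (u div 3)" "u div 3 < k" unfolding hub_triangles_def by auto
    then show "u \<in> (\<lambda>i. 3*i) ` {..<k}" by blast
  qed (auto simp: hub_triangles_def)
  have "indep_sum {..<3*k+1} (hub_triangles k) z
        = indep_sum ({..<3*k+1} - {3*k}) (hub_triangles k) z + z * indep_sum ?W (hub_triangles k) z"
    by (rule indep_sum_remove_vertex) (simp_all add: simple_graph_hub_triangles)
  also have "{..<3*k+1} - {3*k} = {..<3*k}" by auto
  also have "indep_sum ?W (hub_triangles k) z = (1 + z) ^ card ?W"
    by (rule indep_sum_edgeless) (auto simp: W simple_graph_hub_triangles hub_triangles_def)
  also have "card ?W = k" unfolding W by (simp add: card_image inj_on_def)
  finally have "indep_sum {..<3*k+1} (hub_triangles k) z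
                = indep_sum {..<3*k} (hub_triangles k) z + z * (1 + z) ^ k" .
  then show ?thesis by (simp only: indep_sum_hub_triangles_first_triangles[OF order_refl])
qed

lemma poly_indep_poly_hub_triangles:
  assumes "3*k+1 \<le> n"
  shows "poly (indep_poly {..<n} (hub_triangles k)) z
         = (1 + z) ^ (n - (3*k+1)) * ((1 + 3*z) ^ k + z * (1 + z) ^ k)"
  using assms
proof (induction n rule: dec_induct)
  case base
  show ?case using indep_sum_hub_triangles_core[of k z] by (simp add: poly_indep_poly)
next
  case (step n)
  have "indep_sum (insert n {..<n}) (hub_triangles k) z = (1 + z) * indep_sum {..<n} (hub_triangles k) z"
    by (rule indep_sum_insert_isolated)
      (use step.hyps(1) in \<open>auto simp: simple_graph_hub_triangles hub_triangles_def\<close>)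
  moreover have "Suc n - (3*k+1) = Suc (n - (3*k+1))" using step.hyps(1) by simp
  ultimately show ?case
    using step.IH by (simp add: poly_indep_poly lessThan_Suc)
qed

lemma finite_indep_root_moduli:
  "finite {norm z | z E. simple_graph {..<n::nat} E \<and> poly (indep_poly {..<n} E) z = 0}"
proof -
  let ?P = "(\<lambda>I. \<Sum>S\<in>I. monom (1::complex) (card S)) ` Pow (Pow {..<n})"
  have "{norm z | z E. simple_graph {..<n} E \<and> poly (indep_poly {..<n} E) z = 0}
        \<subseteq> norm ` (\<Union>p\<in>?P - {0}. {z. poly p z = 0})"
  proof
    fix x assume "x \<in> {norm z | z E. simple_graph {..<n} E \<and> poly (indep_poly {..<n} E) z = 0}"
    then obtain z E where x: "x = norm z" and root: "poly (indep_poly {..<n} E) z = 0" by blast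
    have "indep_poly {..<n} E = (\<lambda>I. \<Sum>S\<in>I. monom 1 (card S)) {S. indep_set {..<n} E S}"
      by (simp add: indep_poly_eq_sum_monom)
    then have "indep_poly {..<n} E \<in> ?P" by (rule image_eqI) (auto simp: indep_set_def)
    moreover have "poly (indep_poly {..<n} E) 0 = 1"
      by (simp add: poly_indep_poly indep_sum_at_0)
    then have "indep_poly {..<n} E \<noteq> 0" by auto
    ultimately show "x \<in> norm ` (\<Union>p\<in>?P - {0}. {z. poly p z = 0})" using x root by blast
  qed
  moreover have "finite (norm ` (\<Union>p\<in>?P - {0}. {z. poly p z = 0}))"
    by (intro finite_imageI finite_UN_I) (auto intro: poly_roots_finite)
  ultimately show ?thesis by (rule finite_subset)
qed

lemma norm_indep_root_le_max_indep_root_modulus: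
  assumes "simple_graph {..<n} E" "poly (indep_poly {..<n} E) z = 0"
  shows "norm z \<le> max_indep_root_modulus n"
  unfolding max_indep_root_modulus_def
  by (rule Max_ge[OF finite_indep_root_moduli]) (use assms in blast)

(* At t = 3^k the left-hand side is at least (3t - 3)^k = t (t - 1)^k; at t = 3^k + k
   Bernoulli's inequality gives t (t - 1)^k \<ge> t^k (t - k) = (3t)^k. *)
lemma exists_root_ge_pow_3:
  "\<exists>t::real. 3^k \<le> t \<and> (3*t - 1)^k = t * (t - 1)^k"
proof -
  define a :: real where "a = 3^k"
  define b :: real where "b = a + k"
  define h where "h = (\<lambda>t::real. (3*t - 1)^k - t * (t - 1)^k)"
  have a1: "1 \<le> a" unfolding a_def by simp
  have b: "1 \<le> b" "a \<le> b" using a1 unfolding b_def by auto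
  have "(3*a - 3)^k \<le> (3*a - 1)^k" by (rule power_mono) (use a1 in auto)
  moreover have "(3*a - 3)^k = a * (a - 1)^k"
    unfolding a_def by (simp add: power_mult_distrib[symmetric] algebra_simps)
  ultimately have ha: "0 \<le> h a" unfolding h_def by simp
  have "b^k * (b - k) = b^(k+1) * (1 + of_nat k * (- 1/b))"
    using b by (simp add: field_simps)
  also have "\<dots> \<le> b^(k+1) * (1 + (- 1/b))^k"
    by (intro mult_left_mono Bernoulli_inequality) (use b in simp_all)
  also have "\<dots> = b * (b * (1 + (- 1/b)))^k" by (simp add: power_mult_distrib)
  also have "b * (1 + (- 1/b)) = b - 1" using b by (simp add: field_simps)
  finally have "b^k * a \<le> b * (b - 1)^k" by (simp add: b_def)
  moreover have "(3*b)^k = b^k * a" unfolding a_def by (simp add: power_mult_distrib)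
  moreover have "(3*b - 1)^k \<le> (3*b)^k" by (rule power_mono) (use b in auto)
  ultimately have hb: "h b \<le> 0" unfolding h_def by linarith
  have "\<exists>t. a \<le> t \<and> t \<le> b \<and> h t = 0"
    by (rule IVT2[OF hb ha b(2)]) (auto simp: h_def intro!: continuous_intros)
  then show ?thesis unfolding h_def a_def by auto
qed

lemma hub_triangles_poly_real_root:
  "\<exists>x::real. 3^k \<le> - x \<and> (1 + 3*x)^k + x * (1 + x)^k = 0"
proof -
  obtain t :: real where t: "3^k \<le> t" "(3*t - 1)^k = t * (t - 1)^k"
    using exists_root_ge_pow_3 by blast
  have "(1 + 3*(-t))^k + (-t) * (1 + (-t))^k = (-1)^k * ((3*t - 1)^k - t * (t - 1)^k)"
    by (simp add: power_mult_distrib[symmetric] algebra_simps)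
  then show ?thesis using t by (intro exI[of _ "-t"]) simp
qed

lemma proposition2_bound_eq:
  assumes "n \<ge> 1"
  shows "(if n mod 3 = 0 then 3 powr ((real n - 3) / 3)
          else if n mod 3 = 1 then 3 powr ((real n - 1) / 3)
          else 3 powr ((real n - 2) / 3)) = (3::real) ^ ((n - 1) div 3)"
proof -
  define q where "q = (n - 1) div 3"
  have "(n = 3*q + 3 \<and> n mod 3 = 0) \<or> (n = 3*q + 1 \<and> n mod 3 = 1) \<or> (n = 3*q + 2 \<and> n mod 3 = 2)"
    using assms unfolding q_def by presburger
  then have "(if n mod 3 = 0 then 3 powr ((real n - 3) / 3)
          else if n mod 3 = 1 then 3 powr ((real n - 1) / 3)
          else 3 powr ((real n - 2) / 3)) = 3 powr real q"
    by auto
  then show ?thesis by (simp add: q_def powr_realpow)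
qed

theorem proposition2:
  fixes n :: nat
  assumes "n \<ge> 1"
  shows "max_indep_root_modulus n \<ge>
           (if n mod 3 = 0 then 3 powr ((real n - 3) / 3)
            else if n mod 3 = 1 then 3 powr ((real n - 1) / 3)
            else 3 powr ((real n - 2) / 3))"
proof -
  define k where "k = (n - 1) div 3"
  obtain x :: real where x: "3^k \<le> - x" "(1 + 3*x)^k + x * (1 + x)^k = 0"
    using hub_triangles_poly_real_root by blast
  have "3*k+1 \<le> n" using assms unfolding k_def by linarith
  then have "poly (indep_poly {..<n} (hub_triangles k)) (of_real x) = 0"
    using arg_cong[OF x(2), of complex_of_real] by (simp add: poly_indep_poly_hub_triangles)
  then have "norm (complex_of_real x) \<le> max_indep_root_modulus n"
    by (rule norm_indep_root_le_max_indep_root_modulus[OF simple_graph_hub_triangles[OF finite_lessThan]])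
  then show ?thesis
    unfolding proposition2_bound_eq[OF assms] k_def[symmetric] using x(1) by simp
qed

end
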